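(* Let $I\subset\mathbb{R}$ be an open interval, $\lambda:I\to\mathbb{R}$ a non-constant positive smooth function, and fix a sign $\pm$. For $c\in I$, let $f_c:\mathbb{R}^2\to\tilde M(1-\lambda^2,2(1\pm\lambda))$, $f_c(x,y)=(x,y,c)$, with $\mathbb{R}^2$ carrying the induced metric (so $f_c$ is an anti-invariant isometric immersion with unit normal $e_3$). Then $f_c$ is proper biharmonic if and only if $\lambda'(c)\neq0$ and $$\Big(\lambda\lambda''-2(\lambda')^2-8\lambda^2(1\pm\lambda)^2\Big)\Big|_{z=c}=0,$$ with the sign $\pm$ the same as in $\tilde M(1-\lambda^2,2(1\pm\lambda))$.
   Context: Definition of $\tilde M(1-\lambda^2,2(1\pm\lambda))$: Let $\lambda:I\to\mathbb{R}$ be a non-constant positive smooth function on an open interval $I$, $\lambda'=d\lambda/dz$. On $\tilde M^3=\mathbb{R}^2\times I\subset\mathbb{R}^3$ with coordinates $(x,y,z)$ consider the vector fields $e_1=\partial_x$, $e_2=\partial_y$, $e_3=(\pm 2y+f(z))\partial_x+\big(2\lambda x-\frac{\lambda'}{2\lambda}y+h(z)\big)\partial_y+\partial_z$, where $f,h$ are arbitrary smooth functions of $z$. Let $g$ be the Riemannian metric with $g(e_i,e_j)=\delta_{ij}$, $\xi=e_1$, $\eta$ the $1$-form dual to $e_1$, and $\phi$ the $(1,1)$-tensor with $\phi e_1=0$, $\phi e_2=\pm e_3$, $\phi e_3=\mp e_2$ (all double signs correspond to the sign in $\pm 2y$). This is a contact metric manifold which is a generalized $(\kappa,\mu)$-manifold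 with $\kappa=1-\lambda^2$, $\mu=2(1\pm\lambda)$. A surface is anti-invariant if tangent to $\xi$ and $g(X,\phi Y)=0$ for tangent $X,Y$. An isometric immersion $f$ is biharmonic if $\tau_2(f)=-\Delta_f\tau(f)+\mathrm{trace}\,\tilde R(\tau(f),df)df=0$ ($\tau(f)=2H$, $H$ the mean curvature vector, $\tilde R(X,Y)=[\tilde\nabla_X,\tilde\nabla_Y]-\tilde\nabla_{[X,Y]}$), and proper biharmonic if biharmonic and not minimal. *)

theory Defs
  imports "HOL-Analysis.Analysis"
begin

definition pd :: "(real^'n \<Rightarrow> real) \<Rightarrow> 'n \<Rightarrow> real^'n \<Rightarrow> real" where
  "pd F i p = deriv (\<lambda>t. F (p + t *\<^sub>R axis i 1)) 0"

definition smooth_on :: "real set \<Rightarrow> (real \<Rightarrow> real) \<Rightarrow> bool" where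
  "smooth_on I F \<longleftrightarrow> (\<forall>n. \<forall>z\<in>I. ((deriv ^^ n) F) differentiable (at z))"

(* metric tensor in coordinates: G p $ i $ j = g(d_i, d_j) at p.
   Christoffel symbols Gamma^k_{ij} of the Levi-Civita connection *)
definition christoffel :: "(real^'n \<Rightarrow> real^'n^'n) \<Rightarrow> real^'n \<Rightarrow> 'n \<Rightarrow> 'n \<Rightarrow> 'n \<Rightarrow> real" where
  "christoffel G p k i j =
     (\<Sum>l\<in>UNIV. matrix_inv (G p) $ k $ l *
        (pd (\<lambda>q. G q $ j $ l) i p + pd (\<lambda>q. G q $ i $ l) j p - pd (\<lambda>q. G q $ i $ j) l p)) / 2"

(* Riemann curvature components, R(d_i,d_j)d_k = sum_l R^l_{ijk} d_l,
   with R(X,Y) = [nabla_X, nabla_Y] - nabla_[X,Y] *)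
definition curv :: "(real^'n \<Rightarrow> real^'n^'n) \<Rightarrow> real^'n \<Rightarrow> 'n \<Rightarrow> 'n \<Rightarrow> 'n \<Rightarrow> 'n \<Rightarrow> real" where
  "curv G p l i j k =
     pd (\<lambda>q. christoffel G q l j k) i p - pd (\<lambda>q. christoffel G q l i k) j p
     + (\<Sum>m\<in>UNIV. christoffel G p l i m * christoffel G p m j k
                   - christoffel G p l j m * christoffel G p m i k)"

definition curv_op :: "(real^'n \<Rightarrow> real^'n^'n) \<Rightarrow> real^'n \<Rightarrow> real^'n \<Rightarrow> real^'n \<Rightarrow> real^'n \<Rightarrow> real^'n" where
  "curv_op G p X Y Z = (\<chi> l. \<Sum>i\<in>UNIV. \<Sum>j\<in>UNIV. \<Sum>k\<in>UNIV. X $ i * Y $ j * Z $ k * curv G p l i j k)"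

definition dmap :: "(real^'m \<Rightarrow> real^'n) \<Rightarrow> 'm \<Rightarrow> real^'m \<Rightarrow> real^'n" where
  "dmap f a u = (\<chi> k. pd (\<lambda>w. f w $ k) a u)"

definition ind_metric :: "(real^'n \<Rightarrow> real^'n^'n) \<Rightarrow> (real^'m \<Rightarrow> real^'n) \<Rightarrow> real^'m \<Rightarrow> real^'m^'m" where
  "ind_metric G f u = (\<chi> a b. dmap f a u \<bullet> (G (f u) *v dmap f b u))"

definition covd :: "(real^'n \<Rightarrow> real^'n^'n) \<Rightarrow> (real^'m \<Rightarrow> real^'n) \<Rightarrow> (real^'m \<Rightarrow> real^'n) \<Rightarrow> 'm \<Rightarrow> real^'m \<Rightarrow> real^'n" where
  "covd G f V a u = (\<chi> k. pd (\<lambda>w. V w $ k) a u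
      + (\<Sum>i\<in>UNIV. \<Sum>j\<in>UNIV. christoffel G (f u) k i j * dmap f a u $ i * V u $ j))"

(* tension field tau(f) = trace nabla df, domain carrying the induced metric *)
definition tension :: "(real^'n \<Rightarrow> real^'n^'n) \<Rightarrow> (real^'m \<Rightarrow> real^'n) \<Rightarrow> real^'m \<Rightarrow> real^'n" where
  "tension G f u = (\<Sum>a\<in>UNIV. \<Sum>b\<in>UNIV. matrix_inv (ind_metric G f u) $ a $ b *\<^sub>R
       (covd G f (dmap f b) a u
        - (\<Sum>c\<in>UNIV. christoffel (ind_metric G f) u c a b *\<^sub>R dmap f c u)))"

(* bitension field tau_2(f) = - Delta_f tau(f) + trace R(tau(f), df) df,
   with - Delta_f = trace (nabla^f nabla^f - nabla^f_nabla) *)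
definition bitension :: "(real^'n \<Rightarrow> real^'n^'n) \<Rightarrow> (real^'m \<Rightarrow> real^'n) \<Rightarrow> real^'m \<Rightarrow> real^'n" where
  "bitension G f u =
     (\<Sum>a\<in>UNIV. \<Sum>b\<in>UNIV. matrix_inv (ind_metric G f u) $ a $ b *\<^sub>R
        (covd G f (covd G f (tension G f) b) a u
         - (\<Sum>c\<in>UNIV. christoffel (ind_metric G f) u c a b *\<^sub>R covd G f (tension G f) c u)))
   + (\<Sum>a\<in>UNIV. \<Sum>b\<in>UNIV. matrix_inv (ind_metric G f u) $ a $ b *\<^sub>R
        curv_op G (f u) (tension G f u) (dmap f a u) (dmap f b u))"

definition minimal_map :: "(real^'n \<Rightarrow> real^'n^'n) \<Rightarrow> (real^'m \<Rightarrow> real^'n) \<Rightarrow> bool" where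
  "minimal_map G f \<longleftrightarrow> (\<forall>u. tension G f u = 0)"

definition biharmonic :: "(real^'n \<Rightarrow> real^'n^'n) \<Rightarrow> (real^'m \<Rightarrow> real^'n) \<Rightarrow> bool" where
  "biharmonic G f \<longleftrightarrow> (\<forall>u. bitension G f u = 0)"

definition proper_biharmonic :: "(real^'n \<Rightarrow> real^'n^'n) \<Rightarrow> (real^'m \<Rightarrow> real^'n) \<Rightarrow> bool" where
  "proper_biharmonic G f \<longleftrightarrow> biharmonic G f \<and> \<not> minimal_map G f"

(* metric for which the given frame (columns of E p) is orthonormal *)
definition frame_metric :: "(real^'n \<Rightarrow> real^'n^'n) \<Rightarrow> real^'n \<Rightarrow> real^'n^'n" where
  "frame_metric E p = transpose (matrix_inv (E p)) ** matrix_inv (E p)"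

(* s = 1 or s = -1 encodes the sign +-; ff, hh are the functions f, h *)
definition e3_field :: "real \<Rightarrow> (real \<Rightarrow> real) \<Rightarrow> (real \<Rightarrow> real) \<Rightarrow> (real \<Rightarrow> real) \<Rightarrow> real^3 \<Rightarrow> real^3" where
  "e3_field s lam ff hh p =
     (let x = p $ 1; y = p $ 2; z = p $ 3 in
      vector [s * 2 * y + ff z, 2 * lam z * x - deriv lam z / (2 * lam z) * y + hh z, 1])"

definition frame_E :: "real \<Rightarrow> (real \<Rightarrow> real) \<Rightarrow> (real \<Rightarrow> real) \<Rightarrow> (real \<Rightarrow> real) \<Rightarrow> real^3 \<Rightarrow> real^3^3" where
  "frame_E s lam ff hh p =
     transpose (vector [vector [1, 0, 0], vector [0, 1, 0], e3_field s lam ff hh p])"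

definition gkm_metric :: "real \<Rightarrow> (real \<Rightarrow> real) \<Rightarrow> (real \<Rightarrow> real) \<Rightarrow> (real \<Rightarrow> real) \<Rightarrow> real^3 \<Rightarrow> real^3^3" where
  "gkm_metric s lam ff hh = frame_metric (frame_E s lam ff hh)"

definition slice_map :: "real \<Rightarrow> real^2 \<Rightarrow> real^3" where
  "slice_map c u = vector [u $ 1, u $ 2, c]"

end

theory Submission
  imports Defs
begin

(* In the coordinates (x,y,z) the metric is the one making d/dx, d/dy and
   e3 = a d/dx + b d/dy + d/dz orthonormal, where a = 2sy + f(z) and
   b = 2 lam x - mu y + h(z) with mu = lam'/(2 lam).  This "shear metric" has an
   explicit inverse, so its Christoffel symbols are explicit rational expressions in
   a, b and their first derivatives.  Along the slice z = c the induced metric is the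
   Euclidean one in (x,y), and one finds
     tau = mu e3,   trace nabla nabla tau = -mu (2 (s + lam)^2 + mu^2) e3,
     trace R(tau, -)- = mu (mu' - mu^2 - 2 (s + lam)^2) e3,
   hence tau_2 = mu (mu' - 2 mu^2 - 4 (s + lam)^2) e3, all evaluated at z = c.
   So f_c is proper biharmonic iff mu(c) <> 0 and the bracket vanishes; for s = +-1
   the bracket is the stated expression divided by 2 lam^2. *)

definition mat3 :: "real \<Rightarrow> real \<Rightarrow> real \<Rightarrow> real \<Rightarrow> real \<Rightarrow> real \<Rightarrow> real \<Rightarrow> real \<Rightarrow> real \<Rightarrow> real^3^3"
  where "mat3 a11 a12 a13 a21 a22 a23 a31 a32 a33 =
     vector [vector [a11, a12, a13], vector [a21, a22, a23], vector [a31, a32, a33]]"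

lemma mat3_nth [simp]:
  "mat3 a11 a12 a13 a21 a22 a23 a31 a32 a33 $ 1 $ 1 = a11"
  "mat3 a11 a12 a13 a21 a22 a23 a31 a32 a33 $ 1 $ 2 = a12"
  "mat3 a11 a12 a13 a21 a22 a23 a31 a32 a33 $ 1 $ 3 = a13"
  "mat3 a11 a12 a13 a21 a22 a23 a31 a32 a33 $ 2 $ 1 = a21"
  "mat3 a11 a12 a13 a21 a22 a23 a31 a32 a33 $ 2 $ 2 = a22"
  "mat3 a11 a12 a13 a21 a22 a23 a31 a32 a33 $ 2 $ 3 = a23"
  "mat3 a11 a12 a13 a21 a22 a23 a31 a32 a33 $ 3 $ 1 = a31"
  "mat3 a11 a12 a13 a21 a22 a23 a31 a32 a33 $ 3 $ 2 = a32"
  "mat3 a11 a12 a13 a21 a22 a23 a31 a32 a33 $ 3 $ 3 = a33"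
  by (simp_all add: mat3_def)

lemma mat3_eq_iff: "(A::real^3^3) = B \<longleftrightarrow> (\<forall>i j. A $ i $ j = B $ i $ j)"
  by (simp add: vec_eq_iff)

lemma mat3_mult:
  "mat3 a11 a12 a13 a21 a22 a23 a31 a32 a33 ** mat3 b11 b12 b13 b21 b22 b23 b31 b32 b33 =
   mat3 (a11*b11+a12*b21+a13*b31) (a11*b12+a12*b22+a13*b32) (a11*b13+a12*b23+a13*b33)
        (a21*b11+a22*b21+a23*b31) (a21*b12+a22*b22+a23*b32) (a21*b13+a22*b23+a23*b33)
        (a31*b11+a32*b21+a33*b31) (a31*b12+a32*b22+a33*b32) (a31*b13+a32*b23+a33*b33)"
  unfolding mat3_eq_iff forall_3 matrix_matrix_mult_def by (simp add: sum_3)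

lemma transpose_mat3:
  "transpose (mat3 a11 a12 a13 a21 a22 a23 a31 a32 a33) = mat3 a11 a21 a31 a12 a22 a32 a13 a23 a33"
  unfolding mat3_eq_iff forall_3 transpose_def by simp

lemma mat_1_eq_mat3: "(mat 1 :: real^3^3) = mat3 1 0 0 0 1 0 0 0 1"
  unfolding mat3_eq_iff forall_3 mat_def by simp

lemma matrix_inv_eqI:
  fixes A B :: "'a::comm_semiring_1^'n^'n"
  assumes "A ** B = mat 1" "B ** A = mat 1"
  shows "matrix_inv A = B"
proof -
  have "\<exists>A'. A ** A' = mat 1 \<and> A' ** A = mat 1"
    using assms by blast
  then have "A ** matrix_inv A = mat 1 \<and> matrix_inv A ** A = mat 1"
    unfolding matrix_inv_def by (rule someI_ex)
  have "matrix_inv A = matrix_inv A ** (A ** B)"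
    using assms(1) by simp
  also have "\<dots> = (matrix_inv A ** A) ** B"
    by (simp add: matrix_mul_assoc)
  finally show ?thesis
    using \<open>A ** matrix_inv A = mat 1 \<and> matrix_inv A ** A = mat 1\<close> by simp
qed

lemma matrix_inv_mat_1: "matrix_inv (mat 1 :: 'a::comm_semiring_1^'n^'n) = mat 1"
  by (rule matrix_inv_eqI) simp_all

lemma pd_eqI: "((\<lambda>t. F (p + t *\<^sub>R axis i 1)) has_real_derivative D) (at 0) \<Longrightarrow> pd F i p = D"
  unfolding pd_def by (rule DERIV_imp_deriv)

lemma pd_const [simp]: "pd (\<lambda>q. k) i p = 0"
  unfolding pd_def by simp

lemma pd_cong_open:
  assumes "open U" "p \<in> U" "\<And>q. q \<in> U \<Longrightarrow> F q = H q"
  shows "pd F i p = pd H i p"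
  unfolding pd_def
proof (rule deriv_cong_ev[OF _ refl])
  have "((\<lambda>t. p + t *\<^sub>R axis i 1) \<longlongrightarrow> p + 0 *\<^sub>R axis i 1) (nhds 0)"
    by (intro tendsto_intros) (simp add: filterlim_ident)
  then have "\<forall>\<^sub>F t in nhds 0. p + t *\<^sub>R axis i 1 \<in> U"
    using assms(1,2) by (auto dest: topological_tendstoD)
  then show "\<forall>\<^sub>F t in nhds 0. F (p + t *\<^sub>R axis i 1) = H (p + t *\<^sub>R axis i 1)"
    by eventually_elim (rule assms(3))
qed

lemma christoffel_const [simp]: "christoffel (\<lambda>p. K) p k i j = 0"
  unfolding christoffel_def by simp

lemma has_real_derivative_shift_0:
  "(f has_real_derivative D) (at z) \<Longrightarrow> ((\<lambda>t. f (z + t)) has_real_derivative D) (at 0)"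
  using DERIV_shift[of f D 0 z] by (simp add: add.commute)

lemma has_real_derivative_axis_line:
  assumes "(g has_real_derivative D) (at (p $ k))"
  shows "((\<lambda>t. g ((p + t *\<^sub>R axis i 1) $ k)) has_real_derivative (if i = k then D else 0)) (at 0)"
proof (cases "i = k")
  case True
  with has_real_derivative_shift_0[OF assms] show ?thesis by (simp add: axis_def)
next
  case False
  then show ?thesis by (simp add: axis_def)
qed

lemma smooth_on_has_real_derivative:
  assumes "smooth_on I f" "z \<in> I"
  shows "(f has_real_derivative deriv f z) (at z)"
    and "(deriv f has_real_derivative deriv (deriv f) z) (at z)"
proof -
  have "((deriv ^^ 0) f) differentiable (at z)" "((deriv ^^ 1) f) differentiable (at z)"
    using assms unfolding smooth_on_def by blast+
  then show "(f has_real_derivative deriv f z) (at z)"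
    "(deriv f has_real_derivative deriv (deriv f) z) (at z)"
    by (simp_all add: DERIV_deriv_iff_real_differentiable)
qed

(* the Gram matrix of the coordinate fields when d/dx, d/dy, a d/dx + b d/dy + d/dz
   are orthonormal *)
definition shear_metric :: "real \<Rightarrow> real \<Rightarrow> real^3^3"
  where "shear_metric a b = mat3 1 0 (-a) 0 1 (-b) (-a) (-b) (1 + a^2 + b^2)"

lemma matrix_inv_shear_metric:
  "matrix_inv (shear_metric a b) = mat3 (1 + a^2) (a*b) a (a*b) (1 + b^2) b a b 1"
  by (rule matrix_inv_eqI)
    (simp_all add: shear_metric_def mat3_mult mat_1_eq_mat3 power2_eq_square algebra_simps)

lemma frame_metric_shear:
  "frame_metric (\<lambda>p. mat3 1 0 (a p) 0 1 (b p) 0 0 1) p = shear_metric (a p) (b p)"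
proof -
  have "matrix_inv (mat3 1 0 (a p) 0 1 (b p) 0 0 1) = mat3 1 0 (- a p) 0 1 (- b p) 0 0 1"
    by (rule matrix_inv_eqI) (simp_all add: mat3_mult mat_1_eq_mat3)
  then show ?thesis
    unfolding frame_metric_def
    by (simp add: transpose_mat3 mat3_mult shear_metric_def power2_eq_square add_ac)
qed

definition shear_metric_deriv :: "real \<Rightarrow> real \<Rightarrow> real \<Rightarrow> real \<Rightarrow> real^3^3"
  where "shear_metric_deriv a b a' b' = mat3 0 0 (-a') 0 0 (-b') (-a') (-b') (2*a*a' + 2*b*b')"

lemma shear_metric_has_real_derivative:
  assumes "(\<alpha> has_real_derivative a') (at 0)" "(\<beta> has_real_derivative b') (at 0)"
  shows "((\<lambda>t. shear_metric (\<alpha> t) (\<beta> t) $ j $ l) has_real_derivative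
           shear_metric_deriv (\<alpha> 0) (\<beta> 0) a' b' $ j $ l) (at 0)"
  using exhaust_3[of j] exhaust_3[of l] assms
  by (auto simp: shear_metric_def shear_metric_deriv_def intro!: derivative_eq_intros)

(* Gradients of the coefficients a = 2sy + f(z), b = 2 lam x - mu y + h(z) of e3, at a
   point where lam = L, mu = M, f' = F' and db/dz = Bz. *)
definition grad_a :: "real \<Rightarrow> real \<Rightarrow> real^3" where "grad_a s F' = vector [0, 2 * s, F']"
definition grad_b :: "real \<Rightarrow> real \<Rightarrow> real \<Rightarrow> real^3" where "grad_b L M Bz = vector [2 * L, - M, Bz]"

definition christoffel_shear ::
    "real \<Rightarrow> real \<Rightarrow> real \<Rightarrow> real \<Rightarrow> real \<Rightarrow> real \<Rightarrow> real \<Rightarrow> 3 \<Rightarrow> 3 \<Rightarrow> real^3"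
  where "christoffel_shear s L M F' Bz a b i j = (let g = -2*a*b*(s+L) + b^2*M in
  if i = 1 \<and> j = 1 then 0
  else if (i = 1 \<and> j = 2) \<or> (i = 2 \<and> j = 1) then (-(s+L)) *\<^sub>R vector [a, b, 1]
  else if i = 2 \<and> j = 2 then M *\<^sub>R vector [a, b, 1]
  else if (i = 1 \<and> j = 3) \<or> (i = 3 \<and> j = 1) then vector [a*b*(s+L), (s-L) + b^2*(s+L), b*(s+L)]
  else if (i = 2 \<and> j = 3) \<or> (i = 3 \<and> j = 2) then
     vector [L - s + a*(a*(L+s) - b*M), b*(a*(L+s) - b*M), a*(L+s) - b*M]
  else vector [-2*b*L - F' + a*g, b*M - 2*a * s - Bz + b*g, g])"

lemma christoffel_shear_formula:
  "(\<Sum>l\<in>UNIV. matrix_inv (shear_metric a b) $ k $ l *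
      (shear_metric_deriv a b (grad_a s F' $ i) (grad_b L M Bz $ i) $ j $ l
       + shear_metric_deriv a b (grad_a s F' $ j) (grad_b L M Bz $ j) $ i $ l
       - shear_metric_deriv a b (grad_a s F' $ l) (grad_b L M Bz $ l) $ i $ j)) / 2
   = christoffel_shear s L M F' Bz a b i j $ k"
  using exhaust_3[of i] exhaust_3[of j] exhaust_3[of k]
  unfolding sum_3 matrix_inv_shear_metric
  by (elim disjE; simp add: shear_metric_deriv_def grad_a_def grad_b_def christoffel_shear_def Let_def;
      simp add: algebra_simps power2_eq_square)

(* The entry (3,3) is left as 0: the curvature terms needed below never differentiate it. *)
definition christoffel_shear_deriv ::
    "real \<Rightarrow> real \<Rightarrow> real \<Rightarrow> real \<Rightarrow> real \<Rightarrow> real \<Rightarrow> real \<Rightarrow> real \<Rightarrow> real \<Rightarrow> 3 \<Rightarrow> 3 \<Rightarrow> real^3"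
  where "christoffel_shear_deriv s L M a b a' b' L' M' j k =
  (let S = s + L; W = a*(L+s) - b*M; W' = a'*S + a*L' - b'*M - b*M' in
  if j = 1 \<and> k = 1 then 0
  else if (j = 1 \<and> k = 2) \<or> (j = 2 \<and> k = 1) then vector [-(L'*a + S*a'), -(L'*b + S*b'), -L']
  else if j = 2 \<and> k = 2 then vector [M'*a + M*a', M'*b + M*b', M']
  else if (j = 1 \<and> k = 3) \<or> (j = 3 \<and> k = 1) then
     vector [a'*b*S + a*b'*S + a*b*L', -L' + 2*b*b'*S + b^2*L', b'*S + b*L']
  else if (j = 2 \<and> k = 3) \<or> (j = 3 \<and> k = 2) then vector [L' + a'*W + a*W', b'*W + b*W', W']
  else 0)"

lemma christoffel_shear_has_real_derivative:
  assumes "\<not> (j = 3 \<and> k = 3)"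
    and "(a has_real_derivative a') (at 0)" "(b has_real_derivative b') (at 0)"
      "(L has_real_derivative L') (at 0)" "(M has_real_derivative M') (at 0)"
  shows "((\<lambda>t. christoffel_shear s (L t) (M t) (F t) (Bz t) (a t) (b t) j k $ l)
           has_real_derivative christoffel_shear_deriv s (L 0) (M 0) (a 0) (b 0) a' b' L' M' j k $ l)
         (at 0)"
  using exhaust_3[of j] exhaust_3[of k] exhaust_3[of l] assms(1)
  by (elim disjE; simp add: christoffel_shear_def christoffel_shear_deriv_def Let_def;
      auto intro!: derivative_eq_intros assms(2-) simp: algebra_simps power2_eq_square)

lemma e3_field_nonzero: "e3_field s lam ff hh p \<noteq> 0"
proof
  assume "e3_field s lam ff hh p = 0"
  then have "e3_field s lam ff hh p $ 3 = 0" by simp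
  then show False by (simp add: e3_field_def Let_def)
qed

lemma slice_map_axis [simp]:
  "slice_map 0 (axis 1 1) = vector [1, 0, 0]" "slice_map 0 (axis 2 1) = vector [0, 1, 0]"
  by (simp_all add: slice_map_def axis_def)

lemma dmap_slice_map: "dmap (slice_map c) a u = slice_map 0 (axis a 1)"
proof -
  have "pd (\<lambda>w. slice_map c w $ k) a u = slice_map 0 (axis a 1) $ k" for k
    using exhaust_3[of k] by (auto simp: slice_map_def intro!: pd_eqI derivative_eq_intros)
  then show ?thesis by (simp add: dmap_def vec_eq_iff)
qed

locale gkm_manifold =
  fixes I :: "real set" and lam ff hh :: "real \<Rightarrow> real" and s :: real
  assumes I_open: "open I" and lam_smooth: "smooth_on I lam" and lam_pos: "\<And>z. z \<in> I \<Longrightarrow> lam z > 0"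
    and ff_smooth: "smooth_on I ff" and hh_smooth: "smooth_on I hh"
begin

abbreviation "G \<equiv> gkm_metric s lam ff hh"

definition mu :: "real \<Rightarrow> real" where "mu z = deriv lam z / (2 * lam z)"
definition dmu :: "real \<Rightarrow> real"
  where "dmu z = (deriv (deriv lam) z * lam z - (deriv lam z)^2) / (2 * (lam z)^2)"

definition e3x :: "real^3 \<Rightarrow> real" where "e3x q = s * 2 * q$2 + ff (q$3)"
definition e3y :: "real^3 \<Rightarrow> real" where "e3y q = 2 * lam (q$3) * q$1 - mu (q$3) * q$2 + hh (q$3)"
definition dz_e3y :: "real^3 \<Rightarrow> real"
  where "dz_e3y q = 2 * deriv lam (q$3) * q$1 - dmu (q$3) * q$2 + deriv hh (q$3)"

lemma e3_field_eq: "e3_field s lam ff hh q = vector [e3x q, e3y q, 1]"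
  by (simp add: e3_field_def e3x_def e3y_def mu_def Let_def)

lemma gkm_metric_eq: "G q = shear_metric (e3x q) (e3y q)"
proof -
  have "frame_E s lam ff hh = (\<lambda>q. mat3 1 0 (e3x q) 0 1 (e3y q) 0 0 1)"
    by (simp add: fun_eq_iff frame_E_def e3_field_eq mat3_def transpose_mat3[unfolded mat3_def])
  then show ?thesis
    unfolding gkm_metric_def by (simp add: frame_metric_shear)
qed

lemma mu_has_real_derivative: "z \<in> I \<Longrightarrow> (mu has_real_derivative dmu z) (at z)"
  unfolding mu_def[abs_def]
  using smooth_on_has_real_derivative[OF lam_smooth] lam_pos
  by (force intro!: derivative_eq_intros simp: dmu_def power2_eq_square field_simps)

lemma e3x_has_real_derivative_axis:
  assumes "q$3 \<in> I"
  shows "((\<lambda>t. e3x (q + t *\<^sub>R axis i 1)) has_real_derivative grad_a s (deriv ff (q$3)) $ i) (at 0)"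
  using exhaust_3[of i]
    has_real_derivative_shift_0[OF smooth_on_has_real_derivative(1)[OF ff_smooth assms]]
  by (elim disjE; simp add: e3x_def grad_a_def axis_def; auto intro!: derivative_eq_intros)

lemma e3y_has_real_derivative_axis:
  assumes "q$3 \<in> I"
  shows "((\<lambda>t. e3y (q + t *\<^sub>R axis i 1)) has_real_derivative
           grad_b (lam (q$3)) (mu (q$3)) (dz_e3y q) $ i) (at 0)"
  using exhaust_3[of i]
    has_real_derivative_shift_0[OF smooth_on_has_real_derivative(1)[OF hh_smooth assms]]
    has_real_derivative_shift_0[OF smooth_on_has_real_derivative(1)[OF lam_smooth assms]]
    has_real_derivative_shift_0[OF mu_has_real_derivative[OF assms]]
  by (elim disjE; simp add: e3y_def dz_e3y_def grad_b_def axis_def; auto intro!: derivative_eq_intros)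

definition Gamma :: "3 \<Rightarrow> 3 \<Rightarrow> real^3 \<Rightarrow> real^3"
  where "Gamma i j q =
    christoffel_shear s (lam (q$3)) (mu (q$3)) (deriv ff (q$3)) (dz_e3y q) (e3x q) (e3y q) i j"

lemma christoffel_eq:
  assumes "q$3 \<in> I"
  shows "christoffel G q k i j = Gamma i j q $ k"
proof -
  have "pd (\<lambda>q. G q $ j $ l) i q =
      shear_metric_deriv (e3x q) (e3y q) (grad_a s (deriv ff (q$3)) $ i)
        (grad_b (lam (q$3)) (mu (q$3)) (dz_e3y q) $ i) $ j $ l" for i j l
    unfolding gkm_metric_eq
    using shear_metric_has_real_derivative[OF e3x_has_real_derivative_axis[OF assms]
        e3y_has_real_derivative_axis[OF assms]]
    by (intro pd_eqI) simp
  then show ?thesis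
    unfolding christoffel_def gkm_metric_eq Gamma_def christoffel_shear_formula[symmetric] by simp
qed

lemma pd_christoffel:
  assumes "p$3 \<in> I" "\<not> (j = 3 \<and> k = 3)"
  shows "pd (\<lambda>q. christoffel G q l j k) i p =
    christoffel_shear_deriv s (lam (p$3)) (mu (p$3)) (e3x p) (e3y p)
      (grad_a s (deriv ff (p$3)) $ i) (grad_b (lam (p$3)) (mu (p$3)) (dz_e3y p) $ i)
      (if i = 3 then deriv lam (p$3) else 0) (if i = 3 then dmu (p$3) else 0) j k $ l"
proof -
  have "open {q::real^3. q$3 \<in> I}"
    using open_vimage_vec_nth[OF I_open] by (simp add: vimage_def)
  then have "pd (\<lambda>q. christoffel G q l j k) i p = pd (\<lambda>q. Gamma j k q $ l) i p"
    using assms(1) christoffel_eq by (intro pd_cong_open) auto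
  also have "\<dots> = christoffel_shear_deriv s (lam (p$3)) (mu (p$3)) (e3x p) (e3y p)
      (grad_a s (deriv ff (p$3)) $ i) (grad_b (lam (p$3)) (mu (p$3)) (dz_e3y p) $ i)
      (if i = 3 then deriv lam (p$3) else 0) (if i = 3 then dmu (p$3) else 0) j k $ l"
    unfolding Gamma_def
    using christoffel_shear_has_real_derivative[OF assms(2)
        e3x_has_real_derivative_axis[OF assms(1)] e3y_has_real_derivative_axis[OF assms(1)]
        has_real_derivative_axis_line[OF smooth_on_has_real_derivative(1)[OF lam_smooth assms(1)]]
        has_real_derivative_axis_line[OF mu_has_real_derivative[OF assms(1)]]]
    by (intro pd_eqI) simp
  finally show ?thesis .
qed

end

locale gkm_slice = gkm_manifold +
  fixes c :: real
  assumes c_in_I: "c \<in> I"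
begin

abbreviation "f\<^sub>c \<equiv> slice_map c"

lemma slice_map_nth [simp]: "f\<^sub>c w $ 1 = w $ 1" "f\<^sub>c w $ 2 = w $ 2" "f\<^sub>c w $ 3 = c"
  by (simp_all add: slice_map_def)

lemma christoffel_slice: "christoffel G (f\<^sub>c u) k i j = Gamma i j (f\<^sub>c u) $ k"
  using christoffel_eq c_in_I by simp

lemma ind_metric_slice: "ind_metric G f\<^sub>c = (\<lambda>u. mat 1)"
  unfolding ind_metric_def gkm_metric_eq dmap_slice_map
  by (simp add: fun_eq_iff vec_eq_iff forall_2 shear_metric_def inner_vec_def sum_3
      matrix_vector_mult_def mat_def)

lemma tension_slice: "tension G f\<^sub>c = (\<lambda>u. mu c *\<^sub>R e3_field s lam ff hh (f\<^sub>c u))"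
  unfolding tension_def ind_metric_slice matrix_inv_mat_1 christoffel_const covd_def
    dmap_slice_map pd_const christoffel_slice e3_field_eq
  by (simp add: fun_eq_iff vec_eq_iff forall_3 sum_2 sum_3 mat_def Gamma_def christoffel_shear_def Let_def)

lemma covd_tension_slice:
  "covd G f\<^sub>c (tension G f\<^sub>c) b = (\<lambda>w. mu c *\<^sub>R
     (if b = 1 then vector [0, s + lam c, 0] else vector [s + lam c, - mu c, 0]))"
proof -
  have "pd (\<lambda>w. (mu c *\<^sub>R e3_field s lam ff hh (f\<^sub>c w)) $ k) b w =
      mu c * (if b = 1 then vector [0, 2 * lam c, 0] else vector [2 * s, - mu c, 0]) $ k" for k w
    using exhaust_2[of b] exhaust_3[of k]
    by (auto simp: e3_field_eq e3x_def e3y_def axis_def intro!: pd_eqI derivative_eq_intros)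
  then show ?thesis
    using exhaust_2[of b]
    unfolding covd_def tension_slice dmap_slice_map christoffel_slice
    by (elim disjE; simp add: fun_eq_iff vec_eq_iff forall_3 sum_3 e3_field_eq
        Gamma_def christoffel_shear_def Let_def; simp add: algebra_simps power2_eq_square)
qed

lemma curv_slice:
  assumes "j \<noteq> 3"
  shows "curv G (f\<^sub>c u) l i j j =
    christoffel_shear_deriv s (lam c) (mu c) (e3x (f\<^sub>c u)) (e3y (f\<^sub>c u))
      (grad_a s (deriv ff c) $ i) (grad_b (lam c) (mu c) (dz_e3y (f\<^sub>c u)) $ i)
      (if i = 3 then deriv lam c else 0) (if i = 3 then dmu c else 0) j j $ l
    - christoffel_shear_deriv s (lam c) (mu c) (e3x (f\<^sub>c u)) (e3y (f\<^sub>c u))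
      (grad_a s (deriv ff c) $ j) (grad_b (lam c) (mu c) (dz_e3y (f\<^sub>c u)) $ j) 0 0 i j $ l
    + (\<Sum>m\<in>UNIV. Gamma i m (f\<^sub>c u) $ l * Gamma j j (f\<^sub>c u) $ m
                  - Gamma j m (f\<^sub>c u) $ l * Gamma i j (f\<^sub>c u) $ m)"
  unfolding curv_def christoffel_slice
  using pd_christoffel[of "f\<^sub>c u" j j l i] pd_christoffel[of "f\<^sub>c u" i j l j] c_in_I assms
  by simp

lemma trace_covd_covd_tension_slice:
  "(\<Sum>a\<in>UNIV. covd G f\<^sub>c (covd G f\<^sub>c (tension G f\<^sub>c) a) a u) =
     - (mu c * (2 * (s + lam c)^2 + (mu c)^2)) *\<^sub>R e3_field s lam ff hh (f\<^sub>c u)"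
  unfolding covd_tension_slice covd_def pd_const dmap_slice_map christoffel_slice e3_field_eq
  by (simp add: sum_2 vec_eq_iff forall_3 sum_3 Gamma_def christoffel_shear_def Let_def;
      simp add: algebra_simps power2_eq_square)

lemma trace_curvature_tension_slice:
  "(\<Sum>a\<in>UNIV. curv_op G (f\<^sub>c u) (tension G f\<^sub>c u) (dmap f\<^sub>c a u) (dmap f\<^sub>c a u)) =
     (mu c * (dmu c - (mu c)^2 - 2 * (s + lam c)^2)) *\<^sub>R e3_field s lam ff hh (f\<^sub>c u)"
  unfolding curv_op_def dmap_slice_map tension_slice e3_field_eq
  by (simp add: sum_2 sum_3 curv_slice;
      simp add: vec_eq_iff forall_3 sum_3 Gamma_def christoffel_shear_def christoffel_shear_deriv_def
        Let_def grad_a_def grad_b_def;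
      simp add: algebra_simps power2_eq_square)

lemma bitension_slice:
  "bitension G f\<^sub>c u =
     (mu c * (dmu c - 2 * (mu c)^2 - 4 * (s + lam c)^2)) *\<^sub>R e3_field s lam ff hh (f\<^sub>c u)"
proof -
  have "bitension G f\<^sub>c u = (\<Sum>a\<in>UNIV. covd G f\<^sub>c (covd G f\<^sub>c (tension G f\<^sub>c) a) a u)
      + (\<Sum>a\<in>UNIV. curv_op G (f\<^sub>c u) (tension G f\<^sub>c u) (dmap f\<^sub>c a u) (dmap f\<^sub>c a u))"
    unfolding bitension_def ind_metric_slice matrix_inv_mat_1 christoffel_const
    by (simp add: sum_2 mat_def)
  also have "\<dots> = (- (mu c * (2 * (s + lam c)^2 + (mu c)^2))
      + mu c * (dmu c - (mu c)^2 - 2 * (s + lam c)^2)) *\<^sub>R e3_field s lam ff hh (f\<^sub>c u)"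
    unfolding trace_covd_covd_tension_slice trace_curvature_tension_slice scaleR_add_left ..
  also have "\<dots> =
      (mu c * (dmu c - 2 * (mu c)^2 - 4 * (s + lam c)^2)) *\<^sub>R e3_field s lam ff hh (f\<^sub>c u)"
    by (rule arg_cong2[where f = scaleR]) (simp_all add: algebra_simps)
  finally show ?thesis .
qed

end

theorem proposition6p3:
  fixes I :: "real set" and lam ff hh :: "real \<Rightarrow> real" and s c :: real
  assumes "open I" and "is_interval I" and "I \<noteq> {}"
    and "smooth_on I lam" and "\<forall>z\<in>I. lam z > 0" and "\<exists>z1\<in>I. \<exists>z2\<in>I. lam z1 \<noteq> lam z2"
    and "smooth_on I ff" and "smooth_on I hh"
    and "s = 1 \<or> s = -1"
    and "c \<in> I"
  shows "proper_biharmonic (gkm_metric s lam ff hh) (slice_map c) \<longleftrightarrow>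
           (deriv lam c \<noteq> 0 \<and>
            lam c * deriv (deriv lam) c - 2 * (deriv lam c)^2 - 8 * (lam c)^2 * (1 + s * lam c)^2 = 0)"
proof -
  interpret gkm_slice I lam ff hh s c
    using assms by unfold_locales auto
  have lam_c: "lam c > 0"
    using assms by auto
  have minimal: "minimal_map G f\<^sub>c \<longleftrightarrow> deriv lam c = 0"
    unfolding minimal_map_def tension_slice using e3_field_nonzero lam_c by (simp add: mu_def)
  have biharmonic: "biharmonic G f\<^sub>c \<longleftrightarrow>
      mu c = 0 \<or> dmu c - 2 * (mu c)^2 - 4 * (s + lam c)^2 = 0"
    unfolding biharmonic_def bitension_slice using e3_field_nonzero by simp
  have "dmu c - 2 * (mu c)^2 - 4 * (s + lam c)^2 =
      (lam c * deriv (deriv lam) c - 2 * (deriv lam c)^2 - 8 * (lam c)^2 * (1 + s * lam c)^2)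
        / (2 * (lam c)^2)"
    using assms(9) lam_c by (auto simp: dmu_def mu_def field_simps power2_eq_square)
  then show ?thesis
    unfolding proper_biharmonic_def biharmonic minimal using lam_c by (auto simp: mu_def)
qed

end
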